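(* Let $p$ be an odd prime and $1\le\ell\le p-1$ with Legendre symbol $\left(\frac{4\ell+1}{p}\right)=-1$. Then for all $n,k\ge0$, $$b\!\left(2p^{2k+3}n+\frac{(4\ell+1)p^{2k+2}-1}{2}\right)\equiv 0\pmod 4.$$
   Context: The mock theta function $\mathcal{B}(q)=\sum_{n\ge0}\frac{q^n(-q;q^2)_n}{(q;q^2)_{n+1}}=\sum_{n\ge0}b(n)q^n$, where $(a;q)_n=\prod_{j=0}^{n-1}(1-aq^j)$. *)

theory Defs
  imports "HOL-Computational_Algebra.Formal_Power_Series" "HOL-Number_Theory.Number_Theory"
begin

definition qpoch :: "'a::comm_ring_1 fps \<Rightarrow> 'a fps \<Rightarrow> nat \<Rightarrow> 'a fps" where
  "qpoch a q n = (\<Prod>j<n. 1 - a * q ^ j)"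

definition B_term :: "nat \<Rightarrow> rat fps" where
  "B_term n = fps_X ^ n * qpoch (- fps_X) (fps_X ^ 2) n
              * inverse (qpoch fps_X (fps_X ^ 2) (Suc n))"

text \<open>b(m) = coefficient of q^m in B(q). Since B_term n has order at least n,
  only the summands n \<le> m contribute to the coefficient of q^m.\<close>
definition b :: "nat \<Rightarrow> rat" where
  "b m = fps_nth (\<Sum>n\<le>m. B_term n) m"

end

theory Submission
  imports Defs
begin

text \<open>
  Put F_k = sum_n q^((2k+1)n) (-q;q^2)_n / (q^3;q^2)_n, so that (1 - q) B(q) = F_0. Shifting the
  summation index gives (1 - q^(2k+1)) F_k = (1 - q) + q (1 + q^(2k+1)) F_(k+1), and a recurrence of
  this shape has only one solution in formal power series. A Wilf-Zeilberger pair shows that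
  the sums G_k of
    (1 + q^(4n+2k+2)) q^(2n^2+(2k+2)n) (-q;q^2)_n (-q^(2k+1);q^2)_n / ((q^3;q^2)_n (q^(2k+1);q^2)_(n+1))
  satisfy the same recurrence. Hence F_0 = G_0, that is
    B(q) = sum_n q^(2n^2+2n) (1 + x^2) / (1 - x)^2 ((-q;q^2)_n / (q;q^2)_n)^2,   x = q^(2n+1).

  Modulo 4 the squared ratio is 1, and (1 + x^2) / (1 - x)^2 = 1 + 2 x V + 4 U with V even in q.
  So for even m the coefficient b(m) is congruent to the number of n with m = 2n^2 + 2n, and
  b(m) is divisible by 4 unless 2m + 1 is a square. For the index m of the corollary,
  2m + 1 = p^(2k+2) (4pn + 4l + 1), and 4pn + 4l + 1 is congruent to the non-residue 4l + 1
  modulo p, so 2m + 1 is not a square.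
\<close>

unbundle fps_syntax

abbreviation q :: "'a::comm_ring_1 fps" where "q \<equiv> fps_X"

section \<open>Series of power series of increasing order\<close>

definition order_ge_index :: "(nat \<Rightarrow> 'a::comm_ring_1 fps) \<Rightarrow> bool" where
  "order_ge_index f \<longleftrightarrow> (\<forall>n i. i < n \<longrightarrow> f n $ i = 0)"

text \<open>Under \<^term>\<open>order_ge_index f\<close> only the terms \<open>n \<le> m\<close> contribute to the
  coefficient of \<open>q^m\<close>, so this is the genuine sum of the series.\<close>
definition fps_series :: "(nat \<Rightarrow> 'a::comm_ring_1 fps) \<Rightarrow> 'a fps" where
  "fps_series f = Abs_fps (\<lambda>m. \<Sum>n\<le>m. f n $ m)"

lemma fps_series_nth: "fps_series f $ m = (\<Sum>n\<le>m. f n $ m)"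
  by (simp add: fps_series_def)

lemma fps_series_add: "fps_series (\<lambda>n. f n + g n) = fps_series f + fps_series g"
  by (simp add: fps_eq_iff fps_series_nth sum.distrib)

lemma fps_series_diff: "fps_series (\<lambda>n. f n - g n) = fps_series f - fps_series g"
  by (simp add: fps_eq_iff fps_series_nth sum_subtractf)

lemma order_ge_index_add:
  "order_ge_index f \<Longrightarrow> order_ge_index g \<Longrightarrow> order_ge_index (\<lambda>n. f n + g n)"
  by (simp add: order_ge_index_def)

lemma order_ge_index_diff:
  "order_ge_index f \<Longrightarrow> order_ge_index g \<Longrightarrow> order_ge_index (\<lambda>n. f n - g n)"
  by (simp add: order_ge_index_def)

lemma fps_mult_nth_eq_0_below:
  fixes f c :: "'a::comm_ring_1 fps"
  assumes "\<forall>i<j. f $ i = 0" "i < j"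
  shows "(c * f) $ i = 0"
  unfolding fps_mult_nth using assms by (intro sum.neutral) auto

lemma order_ge_index_mult_left: "order_ge_index f \<Longrightarrow> order_ge_index (\<lambda>n. c n * f n)"
  unfolding order_ge_index_def by (blast intro: fps_mult_nth_eq_0_below)

lemma order_ge_index_X_power_factor:
  assumes "\<And>n. n \<le> e n"
  shows "order_ge_index (\<lambda>n. q ^ e n * g n)"
  unfolding order_ge_index_def using assms by (simp add: fps_X_power_mult_nth) (meson le_trans not_le)

lemma fps_series_mult_left:
  assumes "order_ge_index f"
  shows "fps_series (\<lambda>n. c * f n) = c * fps_series f"
proof (rule fps_ext)
  fix m
  have trunc: "(\<Sum>n\<le>m. c$j * f n $ (m - j)) = (\<Sum>n\<le>m-j. c$j * f n $ (m - j))"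
    if "j \<le> m" for j
  proof -
    have "(\<Sum>n\<le>m. c$j * f n $ (m - j))
        = (\<Sum>n\<le>m-j. c$j * f n $ (m - j)) + (\<Sum>n\<in>{m-j<..m}. c$j * f n $ (m - j))"
      using that by (subst sum.union_disjoint[symmetric]) (auto intro!: sum.cong)
    moreover have "(\<Sum>n\<in>{m-j<..m}. c$j * f n $ (m - j)) = 0"
      using assms unfolding order_ge_index_def by (intro sum.neutral) auto
    ultimately show ?thesis by simp
  qed
  have "fps_series (\<lambda>n. c * f n) $ m = (\<Sum>j=0..m. \<Sum>n\<le>m. c$j * f n $ (m - j))"
    by (simp add: fps_series_nth fps_mult_nth sum.swap[of _ "{..m}"])
  also have "\<dots> = (\<Sum>j=0..m. \<Sum>n\<le>m-j. c$j * f n $ (m - j))"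
    by (rule sum.cong[OF refl], rule trunc) auto
  also have "\<dots> = (c * fps_series f) $ m"
    by (simp add: fps_mult_nth fps_series_nth sum_distrib_left)
  finally show "fps_series (\<lambda>n. c * f n) $ m = (c * fps_series f) $ m" .
qed

lemma fps_series_Suc_shift:
  assumes "order_ge_index f"
  shows "fps_series f = f 0 + fps_series (\<lambda>n. f (Suc n))"
proof (rule fps_ext)
  fix m
  have "(\<Sum>n\<le>m. f (Suc n) $ m) = (\<Sum>n<m. f (Suc n) $ m) + f (Suc m) $ m"
    by (simp add: lessThan_Suc_atMost[symmetric] del: lessThan_Suc_atMost)
  moreover have "f (Suc m) $ m = 0" using assms by (simp add: order_ge_index_def)
  ultimately show "fps_series f $ m = (f 0 + fps_series (\<lambda>n. f (Suc n))) $ m"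
    by (simp add: fps_series_nth sum.atMost_shift)
qed

lemma fps_series_telescope:
  assumes "order_ge_index h"
  shows "fps_series (\<lambda>n. h (Suc n) - h n) = - h 0"
  using fps_series_Suc_shift[OF assms] by (simp add: fps_series_diff)

lemma fps_seq_eq_0_if_X_factor:
  fixes H c :: "nat \<Rightarrow> 'a::comm_ring_1 fps"
  assumes rec: "\<And>k. H k = q * (c k * H (Suc k))"
  shows "H k = 0"
proof -
  have "\<forall>k. \<forall>i<j. H k $ i = 0" for j
  proof (induction j)
    case (Suc j)
    show ?case
    proof (intro allI impI)
      fix k i assume "i < Suc j"
      then have "i = 0 \<or> (c k * H (Suc k)) $ (i - 1) = 0"
        using Suc.IH by (cases i) (auto intro!: fps_mult_nth_eq_0_below[of j])
      then show "H k $ i = 0" by (subst rec) auto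
    qed
  qed simp
  then show ?thesis by (intro fps_ext) auto
qed

section \<open>Pochhammer products in base \<open>q\<^sup>2\<close>\<close>

lemma power_add_eq: "i + j = m \<Longrightarrow> x ^ i * x ^ j = (x ^ m :: 'a::monoid_mult)"
  using power_add[of x i j] by simp

definition poch_plus :: "nat \<Rightarrow> nat \<Rightarrow> 'a::comm_ring_1 fps" where
  "poch_plus a n = (\<Prod>j<n. 1 + q ^ (a + 2*j))"

definition poch_minus :: "nat \<Rightarrow> nat \<Rightarrow> 'a::comm_ring_1 fps" where
  "poch_minus a n = (\<Prod>j<n. 1 - q ^ (a + 2*j))"

lemma qpoch_eq_poch_plus: "qpoch (- (q ^ a)) (q ^ 2) n = poch_plus a n"
  by (simp add: qpoch_def poch_plus_def power_mult[symmetric] power_add)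

lemma qpoch_eq_poch_minus: "qpoch (q ^ a) (q ^ 2) n = poch_minus a n"
  by (simp add: qpoch_def poch_minus_def power_mult[symmetric] power_add)

lemma poch_plus_0 [simp]: "poch_plus a 0 = 1"
  by (simp add: poch_plus_def)

lemma poch_minus_0 [simp]: "poch_minus a 0 = 1"
  by (simp add: poch_minus_def)

lemma poch_plus_Suc: "poch_plus a (Suc n) = poch_plus a n * (1 + q ^ (a + 2*n))"
  by (simp add: poch_plus_def)

lemma poch_minus_Suc: "poch_minus a (Suc n) = poch_minus a n * (1 - q ^ (a + 2*n))"
  by (simp add: poch_minus_def)

lemma poch_plus_Suc_shift: "poch_plus a (Suc n) = (1 + q ^ a) * poch_plus (a + 2) n"
  unfolding poch_plus_def prod.lessThan_Suc_shift by (simp add: algebra_simps)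

lemma poch_minus_Suc_shift: "poch_minus a (Suc n) = (1 - q ^ a) * poch_minus (a + 2) n"
  unfolding poch_minus_def prod.lessThan_Suc_shift by (simp add: algebra_simps)

lemma poch_minus_1_Suc: "poch_minus 1 (Suc n) = (1 - q) * poch_minus 3 n"
proof -
  have "(1::nat) + 2 = 3"
    by simp
  then show ?thesis
    using poch_minus_Suc_shift[of 1 n] by (simp only: power_one_right)
qed

lemma poch_plus_shift:
  assumes "0 < a"
  shows "poch_plus (a + 2) n = poch_plus a n * (1 + q ^ (a + 2*n)) * inverse (1 + q ^ a :: 'a::field fps)"
proof -
  have "(1 + q ^ a) * inverse (1 + q ^ a :: 'a fps) = 1"
    using assms by (intro inverse_mult_eq_1') simp
  then have "poch_plus (a + 2) n = ((1 + q ^ a) * poch_plus (a + 2) n) * inverse (1 + q ^ a :: 'a fps)"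
    by (simp add: mult_ac)
  then show ?thesis
    by (simp only: poch_plus_Suc_shift[symmetric] poch_plus_Suc)
qed

lemma poch_minus_shift:
  assumes "0 < a"
  shows "poch_minus (a + 2) n = poch_minus a n * (1 - q ^ (a + 2*n)) * inverse (1 - q ^ a :: 'a::field fps)"
proof -
  have "(1 - q ^ a) * inverse (1 - q ^ a :: 'a fps) = 1"
    using assms by (intro inverse_mult_eq_1') simp
  then have "poch_minus (a + 2) n = ((1 - q ^ a) * poch_minus (a + 2) n) * inverse (1 - q ^ a :: 'a fps)"
    by (simp add: mult_ac)
  then show ?thesis
    by (simp only: poch_minus_Suc_shift[symmetric] poch_minus_Suc)
qed

lemma one_minus_X_power_inverse:
  "0 < m \<Longrightarrow> (1 - q ^ m :: 'a::field fps) * inverse (1 - q ^ m) = 1"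
  by (rule inverse_mult_eq_1') simp

section \<open>A transformation formula for \<open>B(q)\<close>\<close>

definition F_term :: "nat \<Rightarrow> nat \<Rightarrow> 'a::field fps" where
  "F_term k n = q ^ ((2*k+1)*n) * poch_plus 1 n * inverse (poch_minus 3 n)"

definition F :: "nat \<Rightarrow> 'a::field fps" where
  "F k = fps_series (F_term k)"

lemma B_term_eq_F_term: "B_term n = inverse (1 - q) * F_term 0 n"
proof -
  have plus: "qpoch (- q) (q ^ 2) n = (poch_plus 1 n :: rat fps)"
    using qpoch_eq_poch_plus[of 1 n] by (simp only: power_one_right)
  have "qpoch q (q ^ 2) (Suc n) = (poch_minus 1 (Suc n) :: rat fps)"
    using qpoch_eq_poch_minus[of 1 "Suc n"] by (simp only: power_one_right)
  also have "\<dots> = (1 - q) * poch_minus 3 n"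
    by (rule poch_minus_1_Suc)
  finally show ?thesis using plus
    by (simp add: B_term_def F_term_def fps_inverse_mult mult_ac)
qed

lemma order_ge_index_F_term: "order_ge_index (F_term k :: nat \<Rightarrow> 'a::field fps)"
proof -
  have "F_term k = (\<lambda>n. q ^ ((2*k+1)*n) * (poch_plus 1 n * inverse (poch_minus 3 n) :: 'a fps))"
    by (simp add: fun_eq_iff F_term_def mult.assoc)
  then show ?thesis
    by (simp only:) (rule order_ge_index_X_power_factor, simp)
qed

lemma F_term_Suc_left: "F_term (Suc k) n = q ^ (2*n) * F_term k n"
  by (simp add: F_term_def power_add[symmetric] algebra_simps)

lemma F_term_Suc_right:
  "(1 - q ^ (2*n+3)) * F_term k (Suc n) = q ^ (2*k+1) * (1 + q ^ (2*n+1)) * F_term k n"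
proof -
  have "(1 - q ^ (2*n+3)) * F_term k (Suc n)
      = ((1 - q ^ (2*n+3)) * inverse (1 - q ^ (2*n+3))) * (q ^ (2*k+1) * (1 + q ^ (2*n+1)) * F_term k n)"
    by (simp add: F_term_def poch_plus_Suc poch_minus_Suc fps_inverse_mult power_add mult_ac)
  then show ?thesis by (simp add: one_minus_X_power_inverse)
qed

lemma F_term_step:
  "F_term k (Suc n) - q * F_term (Suc k) (Suc n)
     = (q ^ (2*k+1) * (F_term k n + q * F_term (Suc k) n) :: 'a::field fps)"
proof -
  have "q * q ^ (2 * Suc n) = (q ^ (2*n+3) :: 'a fps)"
    using power_add_eq[of 1 "2 * Suc n" "2*n+3" q] by simp
  then have shift: "q * F_term (Suc k) (Suc n) = q ^ (2*n+3) * (F_term k (Suc n) :: 'a fps)"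
    by (simp only: F_term_Suc_left mult.assoc[symmetric])
  have "F_term k (Suc n) - q * F_term (Suc k) (Suc n) = (1 - q ^ (2*n+3)) * (F_term k (Suc n) :: 'a fps)"
    unfolding shift by (simp add: algebra_simps)
  also have "\<dots> = q ^ (2*k+1) * (F_term k n + q * F_term (Suc k) n)"
    unfolding F_term_Suc_right F_term_Suc_left by (simp add: algebra_simps)
  finally show ?thesis .
qed

definition solves_recurrence :: "(nat \<Rightarrow> 'a::field fps) \<Rightarrow> bool" where
  "solves_recurrence \<Phi> \<longleftrightarrow>
     (\<forall>k. (1 - q ^ (2*k+1)) * \<Phi> k = (1 - q) + q * (1 + q ^ (2*k+1)) * \<Phi> (Suc k))"

lemma solves_recurrence_unique:
  assumes "solves_recurrence \<Phi>" "solves_recurrence \<Psi>"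
  shows "\<Phi> = \<Psi>"
proof -
  define H where "H k = \<Phi> k - \<Psi> k" for k
  have "H k = q * ((inverse (1 - q ^ (2*k+1)) * (1 + q ^ (2*k+1))) * H (Suc k))" for k
  proof -
    have rec: "(1 - q ^ (2*k+1)) * \<Theta> k = (1 - q) + q * (1 + q ^ (2*k+1)) * \<Theta> (Suc k)"
      if "solves_recurrence \<Theta>" for \<Theta> :: "nat \<Rightarrow> 'a fps"
      using that by (simp add: solves_recurrence_def)
    have "(1 - q ^ (2*k+1)) * H k = (1 - q ^ (2*k+1)) * \<Phi> k - (1 - q ^ (2*k+1)) * \<Psi> k"
      by (simp add: H_def right_diff_distrib)
    also have "\<dots> = q * ((1 + q ^ (2*k+1)) * H (Suc k))"
      unfolding rec[OF assms(1)] rec[OF assms(2)] by (simp add: H_def algebra_simps)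
    finally have "(1 - q ^ (2*k+1)) * H k = q * ((1 + q ^ (2*k+1)) * H (Suc k))" .
    note rec_H = this
    have "inverse (1 - q ^ (2*k+1)) * (1 - q ^ (2*k+1)) = (1 :: 'a fps)"
      using one_minus_X_power_inverse[of "2*k+1"] by (simp add: mult.commute)
    then have "H k = (inverse (1 - q ^ (2*k+1)) * (1 - q ^ (2*k+1))) * H k"
      by simp
    also have "\<dots> = inverse (1 - q ^ (2*k+1)) * (q * ((1 + q ^ (2*k+1)) * H (Suc k)))"
      by (simp only: mult.assoc rec_H)
    finally show ?thesis by (simp only: mult_ac)
  qed
  then have "H k = 0" for k by (rule fps_seq_eq_0_if_X_factor)
  then show ?thesis by (auto simp: H_def)
qed

lemma F_solves_recurrence: "solves_recurrence (F :: nat \<Rightarrow> 'a::field fps)"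
  unfolding solves_recurrence_def
proof
  fix k
  define u :: "nat \<Rightarrow> 'a fps" where "u = (\<lambda>n. F_term k n - q * F_term (Suc k) n)"
  have u0: "u 0 = 1 - q"
    by (simp add: u_def F_term_def)
  have ord: "order_ge_index u"
    unfolding u_def by (intro order_ge_index_diff order_ge_index_mult_left order_ge_index_F_term)
  have "F k - q * F (Suc k) = fps_series u"
    unfolding u_def F_def fps_series_diff fps_series_mult_left[OF order_ge_index_F_term] ..
  also have "\<dots> = u 0 + fps_series (\<lambda>n. q ^ (2*k+1) * (F_term k n + q * F_term (Suc k) n))"
    by (subst fps_series_Suc_shift[OF ord]) (simp add: u_def F_term_step)
  also have "\<dots> = (1 - q) + q ^ (2*k+1) * (F k + q * F (Suc k))"
    unfolding fps_series_mult_left[OF order_ge_index_add[OF order_ge_index_F_term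
        order_ge_index_mult_left[OF order_ge_index_F_term]]]
      fps_series_add fps_series_mult_left[OF order_ge_index_F_term] F_def u0 ..
  finally show "(1 - q ^ (2*k+1)) * F k = (1 - q) + q * (1 + q ^ (2*k+1)) * (F (Suc k) :: 'a fps)"
    by (simp add: algebra_simps)
qed

definition A_term :: "nat \<Rightarrow> nat \<Rightarrow> 'a::field fps" where
  "A_term k n = q ^ (2*n*n + (2*k+2)*n) * poch_plus 1 n * poch_plus (2*k+1) n
                * inverse (poch_minus 3 n * poch_minus (2*k+1) (Suc n))"

lemma A_term_Suc_right:
  "(1 - q ^ (2*n+3)) * (1 - q ^ (2*k+2*n+3)) * A_term k (Suc n)
     = q ^ (4*n+2*k+4) * (1 + q ^ (2*n+1)) * (1 + q ^ (2*k+2*n+1)) * (A_term k n :: 'a::field fps)"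
proof -
  define c :: "'a fps" where "c = (1 - q ^ (2*n+3)) * (1 - q ^ (2*k+2*n+3))"
  have pw: "q ^ (2*Suc n*Suc n + (2*k+2)*Suc n) = q ^ (2*n*n + (2*k+2)*n) * (q ^ (4*n+2*k+4) :: 'a fps)"
    by (rule power_add_eq[symmetric]) (simp add: algebra_simps)
  have ex: "1 + 2*n = 2*n+1" "2*k+1+2*n = 2*k+2*n+1" "3+2*n = 2*n+3" "2*k+1+2*Suc n = 2*k+2*n+3"
    by simp_all
  have "c * inverse c = 1"
    unfolding c_def by (intro inverse_mult_eq_1') simp
  moreover have "c * A_term k (Suc n)
      = (c * inverse c) * (q ^ (4*n+2*k+4) * (1 + q ^ (2*n+1)) * (1 + q ^ (2*k+2*n+1)) * A_term k n)"
    unfolding c_def A_term_def poch_plus_Suc poch_minus_Suc pw ex fps_inverse_mult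
    by (simp only: mult_ac)
  ultimately show ?thesis
    by (simp add: c_def)
qed

lemma A_term_Suc_left:
  "(1 + q ^ (2*k+1)) * (1 - q ^ (2*k+2*n+3)) * A_term (Suc k) n
     = q ^ (2*n) * (1 + q ^ (2*k+2*n+1)) * (1 - q ^ (2*k+1)) * (A_term k n :: 'a::field fps)"
proof -
  define c1 :: "'a fps" where "c1 = 1 + q ^ (2*k+1)"
  define c2 :: "'a fps" where "c2 = 1 - q ^ (2*k+2*n+3)"
  have pw: "q ^ (2*n*n + (2*Suc k+2)*n) = q ^ (2*n*n + (2*k+2)*n) * (q ^ (2*n) :: 'a fps)"
    by (rule power_add_eq[symmetric]) (simp add: algebra_simps)
  have ex: "2 * Suc k + 1 = 2*k+1+2" "2*k+1+2*n = 2*k+2*n+1" "2*k+1+2*Suc n = 2*k+2*n+3"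
    by simp_all
  have pos: "0 < 2*k+1"
    by simp
  have inv_inv: "inverse (inverse (1 - q ^ (2*k+1))) = (1 - q ^ (2*k+1) :: 'a fps)"
    by (rule fps_inverse_idempotent) simp
  have "c1 * inverse c1 = 1" "c2 * inverse c2 = 1"
    unfolding c1_def c2_def by (intro inverse_mult_eq_1'; simp)+
  moreover have "c1 * c2 * A_term (Suc k) n
      = (c1 * inverse c1) * (c2 * inverse c2)
        * (q ^ (2*n) * (1 + q ^ (2*k+2*n+1)) * (1 - q ^ (2*k+1)) * A_term k n)"
    unfolding A_term_def pw ex poch_plus_shift[OF pos] poch_minus_shift[OF pos]
      fps_inverse_mult inv_inv c1_def c2_def
    by (simp only: mult_ac)
  ultimately show ?thesis
    by (simp add: c1_def c2_def)
qed

definition G_term :: "nat \<Rightarrow> nat \<Rightarrow> 'a::field fps" where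
  "G_term k n = (1 + q ^ (4*n+2*k+2)) * A_term k n"

definition WZ_cert :: "nat \<Rightarrow> nat \<Rightarrow> 'a::field fps" where
  "WZ_cert k n = - ((1 - q ^ (2*n+1)) * (1 - q ^ (2*k+1)) * A_term k n)"

lemma G_term_WZ_pair:
  "(1 - q ^ (2*k+1)) * G_term k n - q * (1 + q ^ (2*k+1)) * G_term (Suc k) n
     = WZ_cert k (Suc n) - (WZ_cert k n :: 'a::field fps)"
proof -
  define t :: "'a fps" where "t = q ^ (2*k+1)"
  define x :: "'a fps" where "x = q ^ (2*n)"
  have pw: "q ^ (2*n+3) = q^3 * x" "q ^ (2*k+2*n+3) = t * q^2 * x" "q ^ (4*n+2*k+4) = x^2 * t * q^3"
    "q ^ (2*n+1) = q * x" "q ^ (2*k+2*n+1) = t * x" "q ^ (4*n+2*k+2) = x^2 * t * q"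
    "q ^ (4*n+2*Suc k+2) = x^2 * t * q^3" "q ^ (2*Suc n+1) = q^3 * x"
    unfolding t_def x_def power_add[symmetric] power_mult[symmetric]
      power_Suc[symmetric] power_Suc2[symmetric]
    by (rule arg_cong[where f = "power q"], simp)+
  \<comment> \<open>Clearing the denominator \<open>D\<close> of the two ratio identities \<open>R1 = 0\<close>, \<open>R2 = 0\<close> turns the
    claim into a polynomial identity in \<open>q\<close>, \<open>t\<close>, \<open>x\<close> and \<^term>\<open>A_term k n\<close>.\<close>
  define D :: "'a fps" where "D = (1 - q^3 * x) * (1 - t * q^2 * x) * (1 + t)"
  have "D $ 0 = 1"
    unfolding D_def t_def x_def by simp
  then have D: "D \<noteq> 0"
    by auto
  define R1 :: "'a fps" where "R1 = (1 - q^3 * x) * (1 - t * q^2 * x) * A_term k (Suc n)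
      - x^2 * t * q^3 * (1 + q * x) * (1 + t * x) * A_term k n"
  define R2 :: "'a fps" where "R2 = (1 + t) * (1 - t * q^2 * x) * A_term (Suc k) n
      - x * (1 + t * x) * (1 - t) * A_term k n"
  define \<Delta> :: "'a fps" where "\<Delta> = ((1 - t) * G_term k n - q * (1 + t) * G_term (Suc k) n)
      - (WZ_cert k (Suc n) - WZ_cert k n)"
  have "R1 = 0"
    using A_term_Suc_right[where 'a = 'a, of n k] unfolding R1_def pw by simp
  moreover have "R2 = 0"
    using A_term_Suc_left[where 'a = 'a, of k n] unfolding R2_def pw t_def[symmetric] x_def[symmetric]
    by simp
  moreover have "D * \<Delta> = (1 - q^3 * x) * (1 - t) * (1 + t) * R1
      - q * (1 + t) * (1 + x^2 * t * q^3) * (1 - q^3 * x) * R2"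
    unfolding \<Delta>_def D_def G_term_def WZ_cert_def R1_def R2_def pw t_def[symmetric]
    by (simp add: algebra_simps power2_eq_square power3_eq_cube)
  ultimately have "D * \<Delta> = 0"
    by simp
  with D show ?thesis
    unfolding t_def[symmetric] \<Delta>_def by (simp only: mult_eq_0_iff right_minus_eq simp_thms)
qed

lemma order_ge_index_A_term: "order_ge_index (A_term k :: nat \<Rightarrow> 'a::field fps)"
proof -
  have "A_term k = (\<lambda>n. q ^ (2*n*n + (2*k+2)*n)
      * (poch_plus 1 n * poch_plus (2*k+1) n
         * inverse (poch_minus 3 n * poch_minus (2*k+1) (Suc n)) :: 'a fps))"
    by (simp add: fun_eq_iff A_term_def mult.assoc)
  then show ?thesis
    by (simp only:) (rule order_ge_index_X_power_factor, simp add: algebra_simps)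
qed

lemma order_ge_index_G_term: "order_ge_index (G_term k)"
  unfolding G_term_def[abs_def] by (rule order_ge_index_mult_left[OF order_ge_index_A_term])

lemma order_ge_index_WZ_cert: "order_ge_index (WZ_cert k)"
  using order_ge_index_mult_left[OF order_ge_index_A_term,
      of "\<lambda>n. - ((1 - q ^ (2*n+1)) * (1 - q ^ (2*k+1)))" k]
  by (simp add: WZ_cert_def[abs_def])

definition G :: "nat \<Rightarrow> 'a::field fps" where
  "G k = fps_series (G_term k)"

lemma G_solves_recurrence: "solves_recurrence (G :: nat \<Rightarrow> 'a::field fps)"
  unfolding solves_recurrence_def
proof
  fix k
  have A0: "A_term k 0 = inverse (1 - q ^ (2*k+1) :: 'a fps)"
    by (simp add: A_term_def poch_minus_Suc)
  have "(1 - q ^ (2*k+1)) * G k - q * (1 + q ^ (2*k+1)) * G (Suc k)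
      = fps_series (\<lambda>n. (1 - q ^ (2*k+1)) * G_term k n
          - q * (1 + q ^ (2*k+1)) * (G_term (Suc k) n :: 'a fps))"
    by (simp add: G_def fps_series_diff fps_series_mult_left order_ge_index_G_term)
  also have "\<dots> = fps_series (\<lambda>n. WZ_cert k (Suc n) - WZ_cert k n)"
    by (simp only: G_term_WZ_pair)
  also have "\<dots> = - WZ_cert k 0"
    by (rule fps_series_telescope[OF order_ge_index_WZ_cert])
  also have "\<dots> = (1 - q) * ((1 - q ^ (2*k+1)) * inverse (1 - q ^ (2*k+1)))"
    by (simp add: WZ_cert_def A0 mult.assoc)
  also have "\<dots> = 1 - q"
    using one_minus_X_power_inverse[of "2*k+1"] by simp
  finally show "(1 - q ^ (2*k+1)) * G k = (1 - q) + q * (1 + q ^ (2*k+1)) * (G (Suc k) :: 'a fps)"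
    by (simp only: diff_eq_eq)
qed

lemma F_eq_G: "F = G"
  by (rule solves_recurrence_unique[OF F_solves_recurrence G_solves_recurrence])

definition C_term :: "nat \<Rightarrow> 'a::field fps" where
  "C_term n = inverse (1 - q) * G_term 0 n"

lemma b_eq_C_series: "b m = fps_series C_term $ m"
proof -
  have "b m = fps_series B_term $ m"
    by (simp add: b_def fps_sum_nth fps_series_nth)
  also have "fps_series B_term = inverse (1 - q) * F 0"
    unfolding B_term_eq_F_term F_def by (rule fps_series_mult_left[OF order_ge_index_F_term])
  also have "\<dots> = fps_series C_term"
    unfolding F_eq_G G_def C_term_def[abs_def]
    by (rule fps_series_mult_left[OF order_ge_index_G_term, symmetric])
  finally show ?thesis .
qed

section \<open>\<open>B(q)\<close> modulo 4\<close>

definition int_coeffs :: "'a::ring_1 fps \<Rightarrow> bool" where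
  "int_coeffs f \<longleftrightarrow> (\<forall>i. f $ i \<in> \<int>)"

definition even_fps :: "'a::comm_ring_1 fps \<Rightarrow> bool" where
  "even_fps f \<longleftrightarrow> (\<forall>i. odd i \<longrightarrow> f $ i = 0)"

lemma int_coeffs_add: "int_coeffs f \<Longrightarrow> int_coeffs g \<Longrightarrow> int_coeffs (f + g)"
  by (simp add: int_coeffs_def)

lemma int_coeffs_mult: "int_coeffs f \<Longrightarrow> int_coeffs g \<Longrightarrow> int_coeffs (f * g)"
  unfolding int_coeffs_def fps_mult_nth by (auto intro!: Ints_sum)

lemma int_coeffs_1: "int_coeffs 1"
  by (simp add: int_coeffs_def)

lemma int_coeffs_power: "int_coeffs f \<Longrightarrow> int_coeffs (f ^ k)"
  by (induction k) (simp_all add: int_coeffs_1 int_coeffs_mult)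

lemma int_coeffs_numeral: "int_coeffs (numeral k)"
  by (simp add: int_coeffs_def fps_numeral_nth)

lemma int_coeffs_X_power: "int_coeffs (q ^ k)"
  by (simp add: int_coeffs_def)

lemma even_fps_add: "even_fps f \<Longrightarrow> even_fps g \<Longrightarrow> even_fps (f + g)"
  by (simp add: even_fps_def)

lemma even_fps_mult:
  assumes "even_fps f" "even_fps g"
  shows "even_fps (f * g)"
  unfolding even_fps_def
proof (intro allI impI)
  fix i :: nat
  assume "odd i"
  then have "f $ j * g $ (i - j) = 0" if "j \<le> i" for j
    using assms that by (cases "even j") (auto simp: even_fps_def)
  then show "(f * g) $ i = 0"
    by (simp add: fps_mult_nth)
qed

lemma even_fps_1: "even_fps 1"
  by (simp add: even_fps_def)

lemma even_fps_X_power: "even k \<Longrightarrow> even_fps (q ^ k)"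
  by (auto simp: even_fps_def)

lemma inverse_one_minus_X_power:
  assumes "0 < m"
  shows "inverse (1 - q ^ m :: 'a::field fps) = Abs_fps (\<lambda>i. if m dvd i then 1 else 0)"
proof (rule fps_inverse_unique, rule fps_ext)
  fix i
  show "((1 - q ^ m) * Abs_fps (\<lambda>i. if m dvd i then 1 else 0)) $ i = (1 :: 'a fps) $ i"
  proof (cases "i < m")
    case True
    then have "m dvd i \<longleftrightarrow> i = 0"
      using assms by (auto dest: dvd_imp_le)
    then show ?thesis
      using True by (simp add: algebra_simps fps_X_power_mult_nth)
  next
    case False
    then have "m dvd i \<longleftrightarrow> m dvd (i - m)"
      using dvd_minus_self by auto
    then show ?thesis
      using False assms by (simp add: algebra_simps fps_X_power_mult_nth)
  qed
qed

lemma int_coeffs_inverse_one_minus_X_power: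
  "0 < m \<Longrightarrow> int_coeffs (inverse (1 - q ^ m :: 'a::field fps))"
  by (simp add: inverse_one_minus_X_power int_coeffs_def)

lemma even_fps_inverse_one_minus_X_power:
  "0 < m \<Longrightarrow> even m \<Longrightarrow> even_fps (inverse (1 - q ^ m :: 'a::field fps))"
  by (auto simp: inverse_one_minus_X_power even_fps_def dest: dvd_trans[of 2 m])

lemma square_one_plus_div_one_minus:
  fixes x ix :: "'a::comm_ring_1"
  assumes "(1 - x) * ix = 1"
  shows "((1 + x) * ix) ^ 2 = 1 + 4 * (x * ix + (x * ix) ^ 2)"
proof -
  have "(1 + x) * ix = 1 + 2 * (x * ix)"
    using assms by (simp add: algebra_simps)
  then show ?thesis
    by (simp only: power_mult_distrib[symmetric] power2_eq_square) (simp add: algebra_simps)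
qed

lemma one_plus_square_div_square:
  fixes x iy :: "'a::comm_ring_1"
  assumes "(1 - x ^ 2) * iy = 1"
  shows "(1 + x ^ 2) * ((1 + x) * iy) ^ 2 = 1 + 4 * (x ^ 2 * iy ^ 2) + 2 * (x * ((1 + x ^ 2) * iy ^ 2))"
proof -
  have "(1 + x ^ 2) * ((1 + x) * iy) ^ 2
      = ((1 - x ^ 2) * iy) ^ 2 + 4 * (x ^ 2 * iy ^ 2) + 2 * (x * ((1 + x ^ 2) * iy ^ 2))"
    by (simp add: algebra_simps power2_eq_square)
  then show ?thesis
    by (simp add: assms)
qed

definition poch_ratio :: "nat \<Rightarrow> 'a::field fps" where
  "poch_ratio n = poch_plus 1 n * inverse (poch_minus 1 n)"

lemma poch_ratio_square_mod_4:
  "\<exists>Z. int_coeffs Z \<and> poch_ratio n ^ 2 = 1 + 4 * (Z :: 'a::field fps)"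
proof (induction n)
  case 0
  show ?case
    by (intro exI[of _ 0]) (simp add: poch_ratio_def int_coeffs_def)
next
  case (Suc n)
  then obtain Z :: "'a fps" where Z: "int_coeffs Z" "poch_ratio n ^ 2 = 1 + 4 * Z"
    by blast
  define x :: "'a fps" where "x = q ^ (1 + 2*n)"
  define ix where "ix = inverse (1 - x)"
  define W where "W = x * ix + (x * ix) ^ 2"
  have "(1 - x) * ix = 1"
    unfolding ix_def x_def by (rule one_minus_X_power_inverse) simp
  then have "((1 + x) * ix) ^ 2 = 1 + 4 * W"
    unfolding W_def by (rule square_one_plus_div_one_minus)
  moreover have "poch_ratio (Suc n) = poch_ratio n * ((1 + x) * ix)"
    by (simp add: poch_ratio_def poch_plus_Suc poch_minus_Suc fps_inverse_mult x_def ix_def mult_ac)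
  ultimately have "poch_ratio (Suc n) ^ 2 = (1 + 4 * Z) * (1 + 4 * W)"
    by (simp only: power_mult_distrib Z(2))
  also have "\<dots> = 1 + 4 * (Z + W + 4 * Z * W)"
    by (simp add: algebra_simps)
  finally have "poch_ratio (Suc n) ^ 2 = 1 + 4 * (Z + W + 4 * Z * W)" .
  moreover have "int_coeffs (Z + W + 4 * Z * W)"
    unfolding W_def ix_def x_def
    by (intro int_coeffs_add int_coeffs_mult int_coeffs_numeral int_coeffs_X_power
        int_coeffs_inverse_one_minus_X_power Z(1) int_coeffs_power; simp)
  ultimately show ?case
    by blast
qed

lemma C_term_eq:
  "C_term n = q ^ (2*n*n+2*n) * (1 + q ^ (4*n+2)) * poch_ratio n ^ 2
              * (inverse (1 - q ^ (2*n+1)) ^ 2 :: 'a::field fps)"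
proof -
  have "(1 - q) * poch_minus 3 n = poch_minus 1 n * (1 - q ^ (2*n+1) :: 'a fps)"
    using poch_minus_1_Suc[where 'a = 'a, of n] poch_minus_Suc[where 'a = 'a, of 1 n]
    by (simp only: add.commute)
  then have inverse_factors: "inverse (1 - q) * inverse (poch_minus 3 n)
      = inverse (poch_minus 1 n) * inverse (1 - q ^ (2*n+1) :: 'a fps)"
    by (metis fps_inverse_mult)
  have ex: "2*0+1 = (1::nat)" "(2*0+2)*n = 2*n" "4*n+2*0+2 = 4*n+2" "1+2*n = 2*n+1"
    by simp_all
  have "C_term n = inverse (1 - q) * ((1 + q ^ (4*n+2)) * (q ^ (2*n*n+2*n) * poch_plus 1 n * poch_plus 1 n
      * inverse (poch_minus 3 n * (poch_minus 1 n * (1 - q ^ (2*n+1)))) :: 'a fps))"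
    by (simp only: C_term_def G_term_def A_term_def ex poch_minus_Suc)
  also have "\<dots> = q ^ (2*n*n+2*n) * (1 + q ^ (4*n+2)) * (poch_plus 1 n * poch_plus 1 n)
      * ((inverse (1 - q) * inverse (poch_minus 3 n))
         * (inverse (poch_minus 1 n) * inverse (1 - q ^ (2*n+1))))"
    by (simp only: fps_inverse_mult mult_ac)
  also have "\<dots> = q ^ (2*n*n+2*n) * (1 + q ^ (4*n+2)) * (poch_plus 1 n * poch_plus 1 n)
      * ((inverse (poch_minus 1 n) * inverse (1 - q ^ (2*n+1)))
         * (inverse (poch_minus 1 n) * inverse (1 - q ^ (2*n+1))))"
    by (simp only: inverse_factors)
  finally show ?thesis
    by (simp only: poch_ratio_def power2_eq_square mult_ac)
qed

lemma even_fps_power2: "even_fps f \<Longrightarrow> even_fps (f ^ 2)"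
  by (simp add: power2_eq_square even_fps_mult)

lemma C_term_mod_4:
  "\<exists>V J. even_fps V \<and> int_coeffs J
     \<and> C_term n = q ^ (2*n*n+2*n) + 2 * (q ^ (2*n*n+4*n+1) * V) + 4 * (J :: 'a::field fps)"
proof -
  obtain Z :: "'a fps" where Z: "int_coeffs Z" "poch_ratio n ^ 2 = 1 + 4 * Z"
    using poch_ratio_square_mod_4 by blast
  define x :: "'a fps" where "x = q ^ (2*n+1)"
  define iy where "iy = inverse (1 - x ^ 2)"
  define U where "U = x ^ 2 * iy ^ 2"
  define V where "V = (1 + x ^ 2) * iy ^ 2"
  define E :: "'a fps" where "E = q ^ (2*n*n+2*n)"
  have x2: "x ^ 2 = q ^ (4*n+2)"
    unfolding x_def power_mult[symmetric] by (simp add: algebra_simps)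
  have iy: "(1 - x ^ 2) * iy = 1"
    unfolding iy_def x2 by (rule one_minus_X_power_inverse) simp
  have "inverse (1 - x) = (1 + x) * iy"
  proof (rule fps_inverse_unique)
    have "(1 - x) * ((1 + x) * iy) = (1 - x ^ 2) * iy"
      by (simp add: algebra_simps power2_eq_square)
    then show "(1 - x) * ((1 + x) * iy) = 1"
      by (simp only: iy)
  qed
  then have "C_term n = E * ((1 + x ^ 2) * ((1 + x) * iy) ^ 2) * poch_ratio n ^ 2"
    unfolding C_term_eq x2[symmetric] x_def[symmetric] E_def[symmetric] by (simp only: mult_ac)
  also have "\<dots> = E * (1 + 4 * U + 2 * (x * V)) * (1 + 4 * Z)"
    unfolding one_plus_square_div_square[OF iy] U_def V_def Z(2) ..
  also have "\<dots> = E + 2 * (E * x * V) + 4 * (E * (U + Z + 4 * U * Z + 2 * x * V * Z))"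
    by (simp add: algebra_simps)
  also have "E * x = q ^ (2*n*n+4*n+1)"
    unfolding E_def x_def by (rule power_add_eq) simp
  finally have "C_term n = E + 2 * (q ^ (2*n*n+4*n+1) * V)
      + 4 * (E * (U + Z + 4 * U * Z + 2 * x * V * Z))" .
  moreover have "even_fps V"
    unfolding V_def iy_def x2
    by (intro even_fps_mult even_fps_add even_fps_1 even_fps_X_power even_fps_power2
        even_fps_inverse_one_minus_X_power) simp_all
  moreover have "int_coeffs (E * (U + Z + 4 * U * Z + 2 * x * V * Z))"
  proof -
    have "int_coeffs x"
      unfolding x_def by (rule int_coeffs_X_power)
    then show ?thesis
      unfolding E_def U_def V_def iy_def x2
      by (intro int_coeffs_mult int_coeffs_add int_coeffs_numeral int_coeffs_1 int_coeffs_X_power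
          int_coeffs_power int_coeffs_inverse_one_minus_X_power Z(1)) simp_all
  qed
  ultimately show ?thesis
    unfolding E_def by blast
qed

lemma b_multiple_of_4:
  assumes "even m" and not_square: "\<And>s. 2*m+1 \<noteq> s^2"
  shows "\<exists>c::int. b m = 4 * of_int c"
proof -
  have "\<forall>n. \<exists>j. j \<in> \<int> \<and> (C_term n :: rat fps) $ m = 4 * j"
  proof
    fix n
    obtain V J :: "rat fps" where VJ: "even_fps V" "int_coeffs J"
      "C_term n = q ^ (2*n*n+2*n) + 2 * (q ^ (2*n*n+4*n+1) * V) + 4 * J"
      using C_term_mod_4 by blast
    have "m \<noteq> 2*n*n+2*n"
    proof
      assume "m = 2*n*n+2*n"
      then have "2*m+1 = (2*n+1)^2"
        by (simp add: power2_eq_square algebra_simps)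
      with not_square show False
        by blast
    qed
    moreover have "(q ^ (2*n*n+4*n+1) * V) $ m = 0"
      using VJ(1) \<open>even m\<close> by (simp only: fps_X_power_mult_nth) (simp add: even_fps_def)
    ultimately have "C_term n $ m = 4 * J $ m"
      by (simp add: VJ(3) fps_numeral_fps_const)
    then show "\<exists>j. j \<in> \<int> \<and> (C_term n :: rat fps) $ m = 4 * j"
      using VJ(2) unfolding int_coeffs_def by blast
  qed
  from choice[OF this] obtain j :: "nat \<Rightarrow> rat"
    where j: "\<forall>n. j n \<in> \<int> \<and> C_term n $ m = 4 * j n"
    by blast
  have "b m = 4 * (\<Sum>n\<le>m. j n)"
    using j by (simp add: b_eq_C_series fps_series_nth sum_distrib_left)
  moreover have "(\<Sum>n\<le>m. j n) \<in> \<int>"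
    using j by (simp add: Ints_sum)
  ultimately show ?thesis
    by (metis Ints_cases)
qed

section \<open>The index of the corollary\<close>

lemma square_cancel_prime_power:
  fixes p M s :: nat
  assumes "prime p" "\<not> p dvd M" "p ^ (2*i) * M = s ^ 2"
  shows "\<exists>t. M = t ^ 2"
  using assms(3)
proof (induction i arbitrary: s)
  case 0
  then show ?case
    by auto
next
  case (Suc i)
  have "p dvd s ^ 2"
    by (simp add: Suc.prems[symmetric])
  then obtain s' where s': "s = p * s'"
    using assms(1) prime_dvd_power by blast
  have "p ^ (2 * Suc i) = p ^ 2 * p ^ (2*i)"
    by (rule power_add_eq[symmetric]) simp
  then have "p ^ 2 * (p ^ (2*i) * M) = p ^ 2 * s' ^ 2"
    using Suc.prems unfolding s' power_mult_distrib by (simp only: mult.assoc)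
  moreover have "p ^ 2 \<noteq> 0"
    using assms(1) by (simp add: prime_gt_0_nat)
  ultimately have "p ^ (2*i) * M = s' ^ 2"
    by simp
  then show ?case
    by (rule Suc.IH)
qed

lemma nonresidue_not_square:
  fixes p a M t :: nat
  assumes "Legendre (int a) (int p) = -1" "[M = a] (mod p)"
  shows "M \<noteq> t ^ 2"
proof
  assume "M = t ^ 2"
  then have "[int t ^ 2 = int a] (mod int p)"
    using assms(2) by (simp add: cong_int_iff flip: of_nat_power)
  then have "QuadRes (int p) (int a)"
    by (auto simp: QuadRes_def)
  with assms(1) show False
    by (simp add: Legendre_def split: if_splits)
qed

lemma nonresidue_not_dvd:
  fixes p a M :: nat
  assumes "Legendre (int a) (int p) = -1" "[M = a] (mod p)"
  shows "\<not> p dvd M"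
proof
  assume "p dvd M"
  then have "p dvd a"
    using cong_dvd_iff[OF assms(2)] by blast
  then have "[int a = 0] (mod int p)"
    by (simp add: cong_0_iff)
  with assms(1) show False
    by (simp add: Legendre_def)
qed

lemma index_eq:
  fixes p l n k :: nat
  assumes "odd p"
  defines "m \<equiv> 2 * p ^ (2 * k + 3) * n + ((4 * l + 1) * p ^ (2 * k + 2) - 1) div 2"
  shows "2 * m + 1 = p ^ (2 * (k + 1)) * (4 * p * n + (4 * l + 1))"
proof -
  define X where "X = (4 * l + 1) * p ^ (2 * k + 2)"
  define P where "P = p ^ (2 * (k + 1))"
  have "odd X"
    using assms(1) by (simp add: X_def)
  then have "2 * ((X - 1) div 2) + 1 = X"
    by (simp add: odd_two_times_div_two_nat)
  moreover have "p ^ (2 * k + 3) = P * p"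
    using power_add_eq[of "2 * (k + 1)" 1 "2 * k + 3" p] by (simp add: P_def)
  moreover have "X = (4 * l + 1) * P"
    by (simp add: X_def P_def)
  ultimately show ?thesis
    unfolding m_def X_def[symmetric] P_def[symmetric] by (simp add: algebra_simps)
qed

lemma index_even:
  fixes p l n k :: nat
  assumes "odd p"
  shows "even (2 * p ^ (2 * k + 3) * n + ((4 * l + 1) * p ^ (2 * k + 2) - 1) div 2)"
    (is "even ?m")
proof -
  have "odd (p ^ (k + 1))"
    using assms by simp
  then obtain r where r: "p ^ (k + 1) = 2 * r + 1"
    by (rule oddE)
  have "p ^ (2 * (k + 1)) = (2 * r + 1) ^ 2"
    unfolding r[symmetric] power_mult[symmetric] by (simp add: mult.commute)
  then have "2 * ?m + 1 = 4 * ((r * r + r) * (4 * p * n + (4 * l + 1)) + p * n + l) + 1"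
    unfolding index_eq[OF assms] by (simp add: power2_eq_square algebra_simps)
  then show ?thesis
    by presburger
qed

lemma index_not_square:
  fixes p l n k s :: nat
  assumes "prime p" "odd p" and nonresidue: "Legendre (int (4 * l + 1)) (int p) = -1"
  shows "2 * (2 * p ^ (2 * k + 3) * n + ((4 * l + 1) * p ^ (2 * k + 2) - 1) div 2) + 1 \<noteq> s ^ 2"
proof
  define M where "M = 4 * p * n + (4 * l + 1)"
  have M_cong: "[M = 4 * l + 1] (mod p)"
    by (simp add: M_def cong_def mult.commute[of 4 p] mult.assoc)
  assume "2 * (2 * p ^ (2 * k + 3) * n + ((4 * l + 1) * p ^ (2 * k + 2) - 1) div 2) + 1 = s ^ 2"
  then have "p ^ (2 * (k + 1)) * M = s ^ 2"
    unfolding M_def index_eq[OF \<open>odd p\<close>, symmetric] .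
  then obtain t where "M = t ^ 2"
    using square_cancel_prime_power[OF \<open>prime p\<close> nonresidue_not_dvd[OF nonresidue M_cong]]
    by blast
  with nonresidue_not_square[OF nonresidue M_cong] show False
    by blast
qed

theorem corollary1p6:
  fixes p l n k :: nat
  assumes "prime p" and "odd p"
    and "1 \<le> l" and "l \<le> p - 1"
    and "Legendre (int (4 * l + 1)) (int p) = -1"
  shows "\<exists>c::int. b (2 * p ^ (2 * k + 3) * n + ((4 * l + 1) * p ^ (2 * k + 2) - 1) div 2)
                 = 4 * of_int c"
  using index_even[OF \<open>odd p\<close>] index_not_square[OF \<open>prime p\<close> \<open>odd p\<close> assms(5)]
  by (rule b_multiple_of_4)

end
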